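(* Let $N>2$, $a>0$, and assume (H1)–(H4). Let $v_a$ be the solution of $(P_a)$ on $[0,R^{2-N}]$. Then $v_a$ has at most a finite number of zeros on $[0,R^{2-N}]$.
   Context: Fix $N>2$, $R>0$, $0<\delta<2$. The function $f:\mathbb{R}\setminus\{0\}\to\mathbb{R}$ is odd and locally Lipschitz and satisfies: (H1) there exist $p>1$ and a function $g$ with $f(u)=|u|^{p-1}u+g(u)$ for all sufficiently large $|u|$, and $\lim_{u\to\infty}|g(u)|/|u|^{p}=0$; (H2) there exist $0<q<1$ and a locally Lipschitz $g_1:\mathbb{R}\to\mathbb{R}$ with $g_1(0)=0$ such that $f(u)=-\frac{1}{|u|^{q-1}u}+g_1(u)$ for all sufficiently small $|u|\neq 0$; (H3) $f$ has a unique positive zero $\beta$, with $f<0$ on $(0,\beta)$ and $f>0$ on $(\beta,\infty)$. $K:[R,\infty)\to(0,\infty)$ with $K$ and $K'$ continuous, and (H4) $\frac{rK'(r)}{K(r)}>-2(N-1)$ on $[R,\infty)$, and there exist $K_0,K_1>0$ and exponents with $N+q(N-2)<\alpha_1\leq\alpha<2(N-1)$ such that $K_0r^{-\alpha}\leq K(r)\leq K_1r^{-\alpha_1}$ on $[R,\infty)$. Define $h(t)=\frac{t^{\frac{2(N-1)}{2-N}}K(t^{\frac{1}{2-N}})}{(N-2)^2}$ for $0<t\le R^{2-N}$. The initial value problem $(P_a)$ is $$v''(t)+h(t)f(v(t))+\frac{v(t)}{t^{2-\delta}}=0\ (t>0),\qquad v(0)=0,\ v'(0)=a,$$ understood in the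 integrated sense: $v\in C^1[0,R^{2-N}]$, $v(0)=0$, $h f(v)$ integrable, and $v'(t)=a-\int_0^t h(s)f(v(s))\,ds-\int_0^t s^{\delta-2}v(s)\,ds$ for all $t\in[0,R^{2-N}]$. This solution exists on all of $[0,R^{2-N}]$ and is unique. *)

theory Defs
  imports "HOL-Analysis.Analysis"
begin

definition loc_lipschitz_on :: "real set \<Rightarrow> (real \<Rightarrow> real) \<Rightarrow> bool" where
  "loc_lipschitz_on S f \<longleftrightarrow>
     (\<forall>x\<in>S. \<exists>e>0. \<exists>L. L-lipschitz_on (cball x e \<inter> S) f)"

definition h_coef :: "nat \<Rightarrow> (real \<Rightarrow> real) \<Rightarrow> real \<Rightarrow> real" where
  "h_coef N K t =
     t powr (2 * (real N - 1) / (2 - real N)) * K (t powr (1 / (2 - real N)))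
       / (real N - 2)\<^sup>2"

text \<open>v solves (P_a) on [0, R^(2-N)] in the integrated sense. Since f is only
  defined on the nonzero reals, h f(v) being (defined and) integrable includes that
  v vanishes only on a null set.\<close>
definition solves_Pa ::
  "nat \<Rightarrow> real \<Rightarrow> real \<Rightarrow> (real \<Rightarrow> real) \<Rightarrow> (real \<Rightarrow> real) \<Rightarrow> real \<Rightarrow> (real \<Rightarrow> real) \<Rightarrow> bool" where
  "solves_Pa N R \<delta> K f a v \<longleftrightarrow>
     (let T = R powr (2 - real N) in
      \<exists>v'. (\<forall>t\<in>{0..T}. (v has_real_derivative v' t) (at t within {0..T}))
        \<and> continuous_on {0..T} v'
        \<and> v 0 = 0
        \<and> negligible {t\<in>{0..T}. v t = 0}
        \<and> (\<lambda>s. h_coef N K s * f (v s)) absolutely_integrable_on {0..T}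
        \<and> (\<forall>t\<in>{0..T}. (\<lambda>s. s powr (\<delta> - 2) * v s) integrable_on {0..t})
        \<and> (\<forall>t\<in>{0..T}. v' t = a - integral {0..t} (\<lambda>s. h_coef N K s * f (v s))
                                  - integral {0..t} (\<lambda>s. s powr (\<delta> - 2) * v s)))"

end

(* Zeros of v can only accumulate at a zero z. At z = 0 this is excluded by v'(0) = a > 0. For z > 0
   write v'' = -F with F = h f(v) + t^(delta-2) v. Near z, h is bounded below and t^(delta-2) above,
   while f(u) -> -infinity as u -> 0+ by (H2) and f is odd, so v F <= 0 wherever v is nonzero and small.
   Hence |v| is convex on every interval where v does not vanish, and between two zeros near z it would
   vanish identically, which the negligibility of the zero set forbids. *)

theory Submission
  imports Defs
begin

lemma loc_lipschitz_on_UNIV_imp_isCont: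
  assumes "loc_lipschitz_on UNIV g"
  shows "isCont g x"
proof -
  obtain e L where "e > 0" "L-lipschitz_on (cball x e \<inter> UNIV) g"
    using assms unfolding loc_lipschitz_on_def by blast
  then have "continuous_on (cball x e) g"
    using lipschitz_on_continuous_on by simp
  then show ?thesis
    using continuous_on_interior \<open>e > 0\<close> by fastforce
qed

lemma filterlim_at_bot_at_right_0_if_singular:
  fixes f g :: "real \<Rightarrow> real"
  assumes q: "0 < q" and g: "isCont g 0"
    and f: "\<exists>\<epsilon>>0. \<forall>u. u \<noteq> 0 \<and> \<bar>u\<bar> < \<epsilon> \<longrightarrow> f u = - 1 / (\<bar>u\<bar> powr (q - 1) * u) + g u"
  shows "filterlim f at_bot (at_right 0)"
proof -
  obtain \<epsilon> where "\<epsilon> > 0" and \<epsilon>: "\<And>u. u \<noteq> 0 \<Longrightarrow> \<bar>u\<bar> < \<epsilon> \<Longrightarrow> f u = - 1 / (\<bar>u\<bar> powr (q - 1) * u) + g u"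
    using f by blast
  have ev: "eventually (\<lambda>u. g u + - 1 / u powr q = f u) (at_right 0)"
    using eventually_at_right_real[OF \<open>\<epsilon> > 0\<close>]
  proof eventually_elim
    case (elim u)
    then have "\<bar>u\<bar> powr (q - 1) * u = u powr q"
      by (simp add: powr_diff)
    then show ?case using \<epsilon>[of u] elim by simp
  qed
  have g0: "(g \<longlongrightarrow> g 0) (at_right 0)"
    using g unfolding isCont_def filterlim_at_split by simp
  have "filterlim (\<lambda>u. u powr q) (at_right 0) (at_right 0)"
    unfolding filterlim_at
  proof
    show "eventually (\<lambda>u. u powr q \<in> {0<..} \<and> u powr q \<noteq> 0) (at_right 0)"
      using eventually_at_right_less[of 0] by (rule eventually_mono) simp
    show "((\<lambda>u. u powr q) \<longlongrightarrow> 0) (at_right 0)"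
      using q eventually_at_right_less[of 0]
      by (intro tendsto_zero_powrI tendsto_ident_at tendsto_const) (auto elim: eventually_mono)
  qed
  then have "filterlim (\<lambda>u. inverse (u powr q)) at_top (at_right 0)"
    by (rule filterlim_compose[OF filterlim_inverse_at_top_right])
  then have "filterlim (\<lambda>u. - 1 / u powr q) at_bot (at_right 0)"
    by (simp add: filterlim_uminus_at_bot inverse_eq_divide)
  then have lim: "filterlim (\<lambda>u. g u + - 1 / u powr q) at_bot (at_right 0)"
    by (rule filterlim_tendsto_add_at_bot_iff[OF g0, THEN iffD2])
  show ?thesis
    using ev lim by (rule filterlim_cong[THEN iffD1, rotated 2]) simp_all
qed

lemma odd_forcing_sign_near_0:
  fixes f :: "real \<Rightarrow> real"
  assumes odd: "\<forall>u. u \<noteq> 0 \<longrightarrow> f (- u) = - f u"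
    and lim: "filterlim f at_bot (at_right 0)" and m: "0 < m"
  shows "\<exists>\<epsilon>>0. \<forall>u H P. u \<noteq> 0 \<longrightarrow> \<bar>u\<bar> < \<epsilon> \<longrightarrow> m \<le> H \<longrightarrow> P \<le> C \<longrightarrow> u * (H * f u + P * u) < 0"
proof -
  have "eventually (\<lambda>u. f u \<le> - (\<bar>C\<bar> + 1) / m) (at_right 0)"
    using lim by (simp add: filterlim_at_bot)
  then obtain b where "b > 0" and b: "\<And>u. 0 < u \<Longrightarrow> u < b \<Longrightarrow> f u \<le> - (\<bar>C\<bar> + 1) / m"
    unfolding eventually_at_right[OF zero_less_one] by auto
  have pos: "H * f u + P * u < 0" if "0 < u" "u < min b 1" "m \<le> H" "P \<le> C" for u H P
  proof -
    have "f u * m \<le> - (\<bar>C\<bar> + 1)"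
      using b[of u] that m by (simp add: field_simps)
    moreover have "H * f u \<le> m * f u"
    proof (rule mult_right_mono_neg)
      have "f u * m < 0" using \<open>f u * m \<le> - (\<bar>C\<bar> + 1)\<close> abs_ge_zero[of C] by linarith
      then show "f u \<le> 0" using m by (simp add: mult_less_0_iff)
    qed (use that in simp)
    moreover have "P * u \<le> \<bar>C\<bar> * u"
      using that by (intro mult_right_mono) auto
    moreover have "\<bar>C\<bar> * u \<le> \<bar>C\<bar>"
      using that mult_left_mono[of u 1 "\<bar>C\<bar>"] by simp
    ultimately show ?thesis by (simp add: mult.commute)
  qed
  have "u * (H * f u + P * u) < 0"
    if "u \<noteq> 0" "\<bar>u\<bar> < min b 1" "m \<le> H" "P \<le> C" for u H P
  proof (cases "u > 0")
    case True
    then show ?thesis using pos[of u H P] that by (simp add: mult_pos_neg)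
  next
    case False
    then have "H * f (- u) + P * (- u) < 0" using pos[of "- u" H P] that by simp
    then have "0 < H * f u + P * u" using odd \<open>u \<noteq> 0\<close> by simp
    then show ?thesis using False \<open>u \<noteq> 0\<close> by (simp add: mult_neg_pos)
  qed
  then show ?thesis using \<open>b > 0\<close> by (intro exI[of _ "min b 1"]) auto
qed

lemma h_coef_ge:
  fixes N :: nat and K :: "real \<Rightarrow> real"
  assumes N: "N > 2" and R: "R > 0" and K0: "0 \<le> K0" and \<alpha>: "\<alpha> \<le> 2 * (real N - 1)"
    and K: "\<forall>r\<ge>R. K0 * r powr (- \<alpha>) \<le> K r"
    and t: "0 < t" "t \<le> R powr (2 - real N)"
  shows "K0 * R powr (2 * (real N - 1) - \<alpha>) / (real N - 2)\<^sup>2 \<le> h_coef N K t"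
proof -
  define r where "r = t powr (1 / (2 - real N))"
  have "R = (R powr (2 - real N)) powr (1 / (2 - real N))"
    using R N by (simp add: powr_powr)
  also have "\<dots> \<le> r"
    unfolding r_def using t N by (intro powr_mono2') simp_all
  finally have "R \<le> r" .
  have "t powr (2 * (real N - 1) / (2 - real N)) = r powr (2 * (real N - 1))"
    unfolding r_def by (simp add: powr_powr)
  then have h: "h_coef N K t = r powr (2 * (real N - 1)) * K r / (real N - 2)\<^sup>2"
    unfolding h_coef_def r_def by simp
  have "K0 * R powr (2 * (real N - 1) - \<alpha>) \<le> K0 * r powr (2 * (real N - 1) - \<alpha>)"
    using R \<open>R \<le> r\<close> K0 \<alpha> by (intro mult_left_mono powr_mono2) simp_all
  also have "\<dots> = r powr (2 * (real N - 1)) * (K0 * r powr (- \<alpha>))"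
    by (simp add: powr_add[symmetric])
  also have "\<dots> \<le> r powr (2 * (real N - 1)) * K r"
    using K \<open>R \<le> r\<close> by (intro mult_left_mono) simp_all
  finally show ?thesis
    unfolding h by (intro divide_right_mono) simp_all
qed

lemma mvt_within_subinterval:
  fixes w w' :: "real \<Rightarrow> real"
  assumes deriv: "\<forall>x\<in>{c..d}. (w has_real_derivative w' x) (at x within {c..d})"
    and "c \<le> a" "a < b" "b \<le> d"
  shows "\<exists>\<xi>\<in>{a<..<b}. w b - w a = w' \<xi> * (b - a)"
proof -
  have "(w has_real_derivative w' x) (at x within {a..b})" if "a \<le> x" "x \<le> b" for x
    by (rule DERIV_subset[of _ _ _ "{c..d}"]) (use deriv assms(2-4) that in auto)
  then show ?thesis
    using mvt_simple[OF \<open>a < b\<close>, of w "\<lambda>x h. w' x * h"]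
    by (simp add: has_field_derivative_imp_has_derivative)
qed

lemma nonpos_if_deriv_mono_where_pos:
  fixes w w' :: "real \<Rightarrow> real"
  assumes deriv: "\<forall>x\<in>{c..d}. (w has_real_derivative w' x) (at x within {c..d})"
    and "w c \<le> 0" "w d \<le> 0"
    and mono: "\<And>x y. c \<le> x \<Longrightarrow> x \<le> y \<Longrightarrow> y \<le> d \<Longrightarrow> \<forall>t\<in>{x..y}. 0 < w t \<Longrightarrow> w' x \<le> w' y"
    and s: "s \<in> {c..d}"
  shows "w s \<le> 0"
proof (rule ccontr)
  assume "\<not> w s \<le> 0"
  then have "0 < w s" by simp
  have cont: "continuous_on {c..d} w"
    using deriv by (intro DERIV_continuous_on) auto
  define A where "A = {t\<in>{c..s}. w t \<le> 0}"
  define B where "B = {t\<in>{s..d}. w t \<le> 0}"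
  have closed_sublevel: "closed {t\<in>{x..y}. w t \<le> 0}" if "c \<le> x" "y \<le> d" for x y
  proof -
    have "closed ({x..y} \<inter> w -` {..0})"
      using that by (intro continuous_closed_preimage continuous_on_subset[OF cont]) auto
    then show ?thesis by (simp add: vimage_def Int_def)
  qed
  have "closed A" unfolding A_def using s by (intro closed_sublevel) auto
  have "closed B" unfolding B_def using s by (intro closed_sublevel) auto
  have "c \<in> A" "d \<in> B" using s assms(2,3) by (auto simp: A_def B_def)
  have "bdd_above A" unfolding A_def by (rule bdd_above_mono[OF bdd_above_Icc[of c s]]) auto
  have "bdd_below B" unfolding B_def by (rule bdd_below_mono[OF bdd_below_Icc[of s d]]) auto
  define c' where "c' = Sup A"
  define d' where "d' = Inf B"
  have "c' \<in> A" unfolding c'_def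
    using \<open>closed A\<close> \<open>c \<in> A\<close> \<open>bdd_above A\<close> by (intro closed_contains_Sup) auto
  have "d' \<in> B" unfolding d'_def
    using \<open>closed B\<close> \<open>d \<in> B\<close> \<open>bdd_below B\<close> by (intro closed_contains_Inf) auto
  have pos: "0 < w t" if "c' < t" "t < d'" for t
  proof (cases "t \<le> s")
    case True
    have "t \<notin> A" using that cSup_upper[OF _ \<open>bdd_above A\<close>, of t] unfolding c'_def by auto
    then show ?thesis using True that \<open>c' \<in> A\<close> by (auto simp: A_def)
  next
    case False
    have "t \<notin> B" using that cInf_lower[OF _ \<open>bdd_below B\<close>, of t] unfolding d'_def by auto
    then show ?thesis using False that \<open>d' \<in> B\<close> by (auto simp: B_def)
  qed
  have "c' \<le> s" "s \<le> d'" "w c' \<le> 0" "w d' \<le> 0" "c \<le> c'" "d' \<le> d"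
    using \<open>c' \<in> A\<close> \<open>d' \<in> B\<close> by (auto simp: A_def B_def)
  moreover have "c' \<noteq> s" "s \<noteq> d'"
    using \<open>w c' \<le> 0\<close> \<open>w d' \<le> 0\<close> \<open>0 < w s\<close> by auto
  ultimately have "c' < s" "s < d'" by simp_all
  obtain \<xi>1 where \<xi>1: "\<xi>1 \<in> {c'<..<s}" "w s - w c' = w' \<xi>1 * (s - c')"
    using mvt_within_subinterval[OF deriv \<open>c \<le> c'\<close> \<open>c' < s\<close>] s by auto
  obtain \<xi>2 where \<xi>2: "\<xi>2 \<in> {s<..<d'}" "w d' - w s = w' \<xi>2 * (d' - s)"
    using mvt_within_subinterval[OF deriv _ \<open>s < d'\<close> \<open>d' \<le> d\<close>] s by auto
  have "0 < w' \<xi>1 * (s - c')" using \<xi>1(2) \<open>0 < w s\<close> \<open>w c' \<le> 0\<close> by linarith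
  then have "0 < w' \<xi>1" using \<open>c' < s\<close> by (simp add: zero_less_mult_iff)
  have "w' \<xi>2 * (d' - s) < 0" using \<xi>2(2) \<open>0 < w s\<close> \<open>w d' \<le> 0\<close> by linarith
  then have "w' \<xi>2 < 0" using \<open>s < d'\<close> by (simp add: mult_less_0_iff)
  have "\<forall>t\<in>{\<xi>1..\<xi>2}. 0 < w t"
    using \<xi>1(1) \<xi>2(1) pos by auto
  then have "w' \<xi>1 \<le> w' \<xi>2"
    using mono[of \<xi>1 \<xi>2] \<xi>1(1) \<xi>2(1) \<open>c \<le> c'\<close> \<open>d' \<le> d\<close> by auto
  with \<open>0 < w' \<xi>1\<close> \<open>w' \<xi>2 < 0\<close> show False by linarith
qed

(* In integrated form v'' = -F, so the hypothesis says v v'' >= 0: both v and -v have nondecreasing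
   derivative wherever they are positive. *)
lemma zeros_eq_if_repelled:
  fixes v v' F :: "real \<Rightarrow> real"
  assumes deriv: "\<forall>x\<in>{c..d}. (v has_real_derivative v' x) (at x within {c..d})"
    and incr: "\<And>x y. c \<le> x \<Longrightarrow> x \<le> y \<Longrightarrow> y \<le> d \<Longrightarrow>
                 F integrable_on {x..y} \<and> v' y - v' x = - integral {x..y} F"
    and repel: "\<And>t. t \<in> {c..d} \<Longrightarrow> v t \<noteq> 0 \<Longrightarrow> v t * F t \<le> 0"
    and negl: "negligible {t\<in>{c..d}. v t = 0}"
    and "v c = 0" "v d = 0" "c \<le> d"
  shows "c = d"
proof -
  have signed: "\<sigma> * v s \<le> 0" if \<sigma>: "\<sigma> = 1 \<or> \<sigma> = -1" and s: "s \<in> {c..d}" for \<sigma> s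
  proof (rule nonpos_if_deriv_mono_where_pos[where w' = "\<lambda>x. \<sigma> * v' x", OF _ _ _ _ s])
    show "\<forall>x\<in>{c..d}. ((\<lambda>x. \<sigma> * v x) has_real_derivative \<sigma> * v' x) (at x within {c..d})"
      using deriv by (auto intro: DERIV_cmult)
    show "\<sigma> * v' x \<le> \<sigma> * v' y"
      if "c \<le> x" "x \<le> y" "y \<le> d" and pos: "\<forall>t\<in>{x..y}. 0 < \<sigma> * v t" for x y
    proof -
      have "0 \<le> integral {x..y} (\<lambda>t. - \<sigma> * F t)"
      proof (rule integral_nonneg)
        show "(\<lambda>t. - \<sigma> * F t) integrable_on {x..y}"
          using integrable_on_mult_right[of F "{x..y}" "- \<sigma>"] incr[OF that(1-3)] by simp
        fix t assume t: "t \<in> {x..y}"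
        have "0 < \<sigma> * v t" using pos t by blast
        moreover from this have "v t \<noteq> 0" by auto
        then have "v t * F t \<le> 0" using repel t that by auto
        ultimately show "0 \<le> - \<sigma> * F t"
          using \<sigma> by (auto simp: mult_le_0_iff zero_less_mult_iff)
      qed
      then have "\<sigma> * integral {x..y} F \<le> 0" by simp
      moreover have "v' x = v' y + integral {x..y} F"
        using conjunct2[OF incr[OF that(1-3)]] by linarith
      then have "\<sigma> * v' x = \<sigma> * v' y + \<sigma> * integral {x..y} F"
        by (simp add: distrib_left)
      ultimately show ?thesis by linarith
    qed
  qed (use \<open>v c = 0\<close> \<open>v d = 0\<close> in auto)
  have "{c..d} \<subseteq> {t\<in>{c..d}. v t = 0}"
    using signed[of 1] signed[of "-1"] by fastforce
  then have "box c d = {}"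
    using negl negligible_subset negligible_interval(1)[of c d] by auto
  then show ?thesis
    using \<open>c \<le> d\<close> by (simp add: box_real)
qed

lemma increment_of_integral_equation:
  fixes v' F G :: "real \<Rightarrow> real"
  assumes eq: "\<forall>t\<in>{0..T}. v' t = a - integral {0..t} F - integral {0..t} G"
    and F: "F integrable_on {0..T}" and G: "\<forall>t\<in>{0..T}. G integrable_on {0..t}"
    and xy: "0 \<le> x" "x \<le> y" "y \<le> T"
  shows "(\<lambda>s. F s + G s) integrable_on {x..y}
           \<and> v' y - v' x = - integral {x..y} (\<lambda>s. F s + G s)"
proof
  have Fy: "F integrable_on {0..y}" and Gy: "G integrable_on {0..y}"
    using integrable_on_subinterval[OF F] G xy by auto
  have "F integrable_on {x..y}" "G integrable_on {x..y}"
    using integrable_on_subinterval[OF Fy] integrable_on_subinterval[OF Gy] xy by auto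
  then show "(\<lambda>s. F s + G s) integrable_on {x..y}"
    by (rule integrable_add)
  have "integral {0..x} F + integral {x..y} F = integral {0..y} F"
    using Henstock_Kurzweil_Integration.integral_combine[OF xy(1,2) Fy] .
  moreover have "integral {0..x} G + integral {x..y} G = integral {0..y} G"
    using Henstock_Kurzweil_Integration.integral_combine[OF xy(1,2) Gy] .
  moreover have "integral {x..y} (\<lambda>s. F s + G s) = integral {x..y} F + integral {x..y} G"
    using \<open>F integrable_on {x..y}\<close> \<open>G integrable_on {x..y}\<close> by (rule integral_add)
  ultimately show "v' y - v' x = - integral {x..y} (\<lambda>s. F s + G s)"
    using eq xy by auto
qed

lemma left_endpoint_zero_isolated_if_deriv_pos:
  fixes v :: "real \<Rightarrow> real"
  assumes deriv: "(v has_real_derivative l) (at c within {c..d})" and "0 < l"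
    and "v c = 0" "c \<le> d"
  shows "c isolated_in {t\<in>{c..d}. v t = 0}"
proof -
  obtain e where "e > 0" and e: "\<And>h. 0 < h \<Longrightarrow> c + h \<in> {c..d} \<Longrightarrow> h < e \<Longrightarrow> v c < v (c + h)"
    using has_real_derivative_pos_inc_right[OF deriv \<open>0 < l\<close>] by blast
  have "y = c" if "y \<in> {t\<in>{c..d}. v t = 0}" "dist c y < e" for y
    using e[of "y - c"] that \<open>v c = 0\<close> by (force simp: dist_real_def)
  then show ?thesis
    unfolding isolated_in_dist_Ex_iff using \<open>e > 0\<close> assms(3,4) by auto
qed

lemma zero_isolated_if_repelled:
  fixes v v' F :: "real \<Rightarrow> real"
  assumes deriv: "\<forall>x\<in>{c..d}. (v has_real_derivative v' x) (at x within {c..d})"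
    and incr: "\<And>x y. c \<le> x \<Longrightarrow> x \<le> y \<Longrightarrow> y \<le> d \<Longrightarrow>
                 F integrable_on {x..y} \<and> v' y - v' x = - integral {x..y} F"
    and negl: "negligible {t\<in>{c..d}. v t = 0}"
    and repel: "\<And>t. t \<in> {c..d} \<Longrightarrow> \<bar>t - z\<bar> < r \<Longrightarrow> v t \<noteq> 0 \<Longrightarrow> \<bar>v t\<bar> < \<epsilon> \<Longrightarrow> v t * F t \<le> 0"
    and "0 < r" "0 < \<epsilon>" and z: "z \<in> {c..d}" "v z = 0"
  shows "z isolated_in {t\<in>{c..d}. v t = 0}"
proof -
  have "continuous_on {c..d} v"
    using deriv by (intro DERIV_continuous_on) auto
  then obtain \<eta> where "\<eta> > 0" and \<eta>: "\<And>t. t \<in> {c..d} \<Longrightarrow> dist t z < \<eta> \<Longrightarrow> \<bar>v t\<bar> < \<epsilon>"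
    using continuous_on_iff[THEN iffD1, rule_format, of "{c..d}" v z \<epsilon>] z \<open>0 < \<epsilon>\<close>
    by (auto simp: dist_real_def)
  have "y = z" if y: "y \<in> {c..d}" "v y = 0" "dist z y < min \<eta> r" for y
  proof -
    define a b where "a = min y z" and "b = max y z"
    have ab: "c \<le> a" "a \<le> b" "b \<le> d" "{a..b} \<subseteq> {c..d}"
      using y z by (auto simp: a_def b_def)
    have near: "\<bar>t - z\<bar> < min \<eta> r" if "t \<in> {a..b}" for t
      using that y(3) by (auto simp: a_def b_def dist_real_def)
    have "a = b"
    proof (rule zeros_eq_if_repelled[where v' = v' and F = F])
      show "\<forall>x\<in>{a..b}. (v has_real_derivative v' x) (at x within {a..b})"
        using ab by (auto intro!: DERIV_subset[OF deriv[rule_format]])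
      show "F integrable_on {x..y} \<and> v' y - v' x = - integral {x..y} F"
        if "a \<le> x" "x \<le> y" "y \<le> b" for x y
        using incr that ab by auto
      show "v t * F t \<le> 0" if "t \<in> {a..b}" "v t \<noteq> 0" for t
        using repel \<eta> near[OF that(1)] that ab by (auto simp: dist_real_def)
      show "negligible {t\<in>{a..b}. v t = 0}"
        by (rule negligible_subset[OF negl]) (use ab in auto)
    qed (use y z ab in \<open>auto simp: a_def b_def\<close>)
    then show ?thesis by (auto simp: a_def b_def)
  qed
  then show ?thesis
    unfolding isolated_in_dist_Ex_iff using \<open>0 < \<eta>\<close> \<open>0 < r\<close> z by (auto intro!: exI[of _ "min \<eta> r"])
qed

lemma h_coef_forcing_sign:
  fixes N :: nat and f K :: "real \<Rightarrow> real"
  assumes N: "N > 2" and R: "R > 0" and \<delta>: "\<delta> \<le> 2"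
    and odd: "\<forall>u. u \<noteq> 0 \<longrightarrow> f (- u) = - f u" and lim: "filterlim f at_bot (at_right 0)"
    and K0: "0 < K0" and \<alpha>: "\<alpha> \<le> 2 * (real N - 1)" and K: "\<forall>r\<ge>R. K0 * r powr (- \<alpha>) \<le> K r"
    and z: "0 < z"
  shows "\<exists>\<epsilon>>0. \<forall>s u. z \<le> s \<longrightarrow> s \<le> R powr (2 - real N) \<longrightarrow> u \<noteq> 0 \<longrightarrow> \<bar>u\<bar> < \<epsilon> \<longrightarrow>
           u * (h_coef N K s * f u + s powr (\<delta> - 2) * u) < 0"
proof -
  define m where "m = K0 * R powr (2 * (real N - 1) - \<alpha>) / (real N - 2)\<^sup>2"
  have "0 < m" using K0 R N by (simp add: m_def)
  obtain \<epsilon> where "\<epsilon> > 0" and \<epsilon>: "\<forall>u H P. u \<noteq> 0 \<longrightarrow> \<bar>u\<bar> < \<epsilon> \<longrightarrow> m \<le> H \<longrightarrow> P \<le> z powr (\<delta> - 2)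
                                  \<longrightarrow> u * (H * f u + P * u) < 0"
    using odd_forcing_sign_near_0[OF odd lim \<open>0 < m\<close>] by blast
  have "m \<le> h_coef N K s" "s powr (\<delta> - 2) \<le> z powr (\<delta> - 2)"
    if "z \<le> s" "s \<le> R powr (2 - real N)" for s
    using that z \<delta> h_coef_ge[OF N R _ \<alpha> K, of s] K0 unfolding m_def
    by (auto intro: powr_mono2')
  then show ?thesis
    using \<epsilon> \<open>\<epsilon> > 0\<close> by blast
qed

lemma finite_zeros_if_repelled:
  fixes v v' F :: "real \<Rightarrow> real"
  assumes deriv: "\<forall>x\<in>{c..d}. (v has_real_derivative v' x) (at x within {c..d})"
    and incr: "\<And>x y. c \<le> x \<Longrightarrow> x \<le> y \<Longrightarrow> y \<le> d \<Longrightarrow>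
                 F integrable_on {x..y} \<and> v' y - v' x = - integral {x..y} F"
    and negl: "negligible {t\<in>{c..d}. v t = 0}"
    and "v c = 0" "0 < v' c"
    and repel: "\<And>z. c < z \<Longrightarrow> z \<le> d \<Longrightarrow> \<exists>r>0. \<exists>\<epsilon>>0. \<forall>t\<in>{c..d}.
                  \<bar>t - z\<bar> < r \<longrightarrow> v t \<noteq> 0 \<longrightarrow> \<bar>v t\<bar> < \<epsilon> \<longrightarrow> v t * F t \<le> 0"
  shows "finite {t\<in>{c..d}. v t = 0}"
proof -
  have "z isolated_in {t\<in>{c..d}. v t = 0}" if z: "z \<in> {t\<in>{c..d}. v t = 0}" for z
  proof (cases "z = c")
    case True
    then show ?thesis
      using left_endpoint_zero_isolated_if_deriv_pos[of v "v' c" c d] deriv z assms(4,5) by auto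
  next
    case False
    then obtain r \<epsilon> where "0 < r" "0 < \<epsilon>" and
      "\<forall>t\<in>{c..d}. \<bar>t - z\<bar> < r \<longrightarrow> v t \<noteq> 0 \<longrightarrow> \<bar>v t\<bar> < \<epsilon> \<longrightarrow> v t * F t \<le> 0"
      using repel[of z] z by auto
    then show ?thesis
      using zero_isolated_if_repelled[OF deriv incr negl] z by blast
  qed
  then have "discrete {t\<in>{c..d}. v t = 0}"
    by (simp add: discrete_def)
  moreover have "continuous_on {c..d} v"
    using deriv by (intro DERIV_continuous_on) auto
  then have "compact {t\<in>{c..d}. v t = 0}"
    unfolding compact_eq_bounded_closed
    by (intro conjI continuous_closed_preimage_constant bounded_subset[OF bounded_closed_interval]) auto
  ultimately show ?thesis
    using discrete_compact_finite_iff by blast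
qed

lemma solves_PaE:
  assumes "solves_Pa N R \<delta> K f a v" and T: "T = R powr (2 - real N)"
  obtains v' where "\<forall>t\<in>{0..T}. (v has_real_derivative v' t) (at t within {0..T})"
    and "\<And>x y. 0 \<le> x \<Longrightarrow> x \<le> y \<Longrightarrow> y \<le> T \<Longrightarrow>
           (\<lambda>s. h_coef N K s * f (v s) + s powr (\<delta> - 2) * v s) integrable_on {x..y}
           \<and> v' y - v' x = - integral {x..y} (\<lambda>s. h_coef N K s * f (v s) + s powr (\<delta> - 2) * v s)"
    and "negligible {t\<in>{0..T}. v t = 0}" and "v 0 = 0" and "v' 0 = a"
proof -
  obtain v' where
    "\<forall>t\<in>{0..T}. (v has_real_derivative v' t) (at t within {0..T})"
    and "v 0 = 0" and "negligible {t\<in>{0..T}. v t = 0}"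
    and int1: "(\<lambda>s. h_coef N K s * f (v s)) absolutely_integrable_on {0..T}"
    and int2: "\<forall>t\<in>{0..T}. (\<lambda>s. s powr (\<delta> - 2) * v s) integrable_on {0..t}"
    and eq: "\<forall>t\<in>{0..T}. v' t = a - integral {0..t} (\<lambda>s. h_coef N K s * f (v s))
                                  - integral {0..t} (\<lambda>s. s powr (\<delta> - 2) * v s)"
    using assms unfolding solves_Pa_def Let_def T[symmetric] by blast
  moreover have "v' 0 = a"
    using eq T by simp
  ultimately show ?thesis
    using that increment_of_integral_equation[OF eq set_lebesgue_integral_eq_integral(1)[OF int1] int2]
    by blast
qed

theorem solves_Pa_finite_zeros:
  fixes N :: nat and R \<delta> a q K0 \<alpha> :: real and f g1 K v :: "real \<Rightarrow> real"
  assumes N: "N > 2" and R: "R > 0" and \<delta>: "\<delta> \<le> 2"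
    and f_odd: "\<forall>u. u \<noteq> 0 \<longrightarrow> f (- u) = - f u"
    and q: "0 < q" and g1: "isCont g1 0"
    and f_sing: "\<exists>\<epsilon>>0. \<forall>u. u \<noteq> 0 \<and> \<bar>u\<bar> < \<epsilon> \<longrightarrow> f u = - 1 / (\<bar>u\<bar> powr (q - 1) * u) + g1 u"
    and K0: "0 < K0" and \<alpha>: "\<alpha> \<le> 2 * (real N - 1)" and K_lower: "\<forall>r\<ge>R. K0 * r powr (- \<alpha>) \<le> K r"
    and a: "0 < a"
    and sol: "solves_Pa N R \<delta> K f a v"
  shows "finite {t \<in> {0..R powr (2 - real N)}. v t = 0}"
proof -
  define T where "T = R powr (2 - real N)"
  define F where "F s = h_coef N K s * f (v s) + s powr (\<delta> - 2) * v s" for s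
  obtain v' where deriv: "\<forall>t\<in>{0..T}. (v has_real_derivative v' t) (at t within {0..T})"
    and incr: "\<And>x y. 0 \<le> x \<Longrightarrow> x \<le> y \<Longrightarrow> y \<le> T \<Longrightarrow>
                 F integrable_on {x..y} \<and> v' y - v' x = - integral {x..y} F"
    and negl: "negligible {t\<in>{0..T}. v t = 0}" and "v 0 = 0" "v' 0 = a"
    using solves_PaE[OF sol T_def] unfolding F_def[abs_def] by blast
  have f_lim: "filterlim f at_bot (at_right 0)"
    by (rule filterlim_at_bot_at_right_0_if_singular[OF q g1 f_sing])
  have repel: "\<exists>r>0. \<exists>\<epsilon>>0. \<forall>t\<in>{0..T}.
                 \<bar>t - z\<bar> < r \<longrightarrow> v t \<noteq> 0 \<longrightarrow> \<bar>v t\<bar> < \<epsilon> \<longrightarrow> v t * F t \<le> 0"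
    if "0 < z" "z \<le> T" for z
  proof -
    obtain \<epsilon> where "\<epsilon> > 0" and \<epsilon>: "\<forall>s u. z / 2 \<le> s \<longrightarrow> s \<le> T \<longrightarrow> u \<noteq> 0 \<longrightarrow> \<bar>u\<bar> < \<epsilon> \<longrightarrow>
                                        u * (h_coef N K s * f u + s powr (\<delta> - 2) * u) < 0"
      using h_coef_forcing_sign[where z = "z / 2", OF N R \<delta> f_odd f_lim K0 \<alpha> K_lower] \<open>0 < z\<close>
      unfolding T_def by auto
    have "v t * F t \<le> 0" if "t \<in> {0..T}" "\<bar>t - z\<bar> < z / 2" "v t \<noteq> 0" "\<bar>v t\<bar> < \<epsilon>" for t
    proof -
      have "z / 2 \<le> t" using that(2) by linarith
      then show ?thesis using \<epsilon>[rule_format, of t "v t"] that unfolding F_def by auto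
    qed
    then show ?thesis
      using \<open>0 < z\<close> \<open>\<epsilon> > 0\<close> half_gt_zero by blast
  qed
  have "finite {t\<in>{0..T}. v t = 0}"
    using finite_zeros_if_repelled[OF deriv incr negl \<open>v 0 = 0\<close> _ repel] \<open>v' 0 = a\<close> a by simp
  then show ?thesis
    unfolding T_def .
qed

theorem lemma2p4:
  fixes N :: nat and R \<delta> a p q \<beta> :: real
    and f g g1 K K' :: "real \<Rightarrow> real"
    and K0 K1 \<alpha> \<alpha>1 :: real
    and v :: "real \<Rightarrow> real"
  assumes N: "N > 2" and R: "R > 0" and \<delta>: "0 < \<delta>" "\<delta> < 2"
    and f_odd: "\<forall>u. u \<noteq> 0 \<longrightarrow> f (- u) = - f u"
    and f_lip: "loc_lipschitz_on (- {0}) f"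
    and H1_p: "p > 1"
    and H1_eq: "\<exists>M. \<forall>u. \<bar>u\<bar> \<ge> M \<longrightarrow> f u = \<bar>u\<bar> powr (p - 1) * u + g u"
    and H1_lim: "((\<lambda>u. \<bar>g u\<bar> / \<bar>u\<bar> powr p) \<longlongrightarrow> 0) at_top"
    and H2_q: "0 < q" "q < 1"
    and H2_g1: "loc_lipschitz_on UNIV g1" "g1 0 = 0"
    and H2_eq: "\<exists>\<epsilon>>0. \<forall>u. u \<noteq> 0 \<and> \<bar>u\<bar> < \<epsilon> \<longrightarrow>
                   f u = - 1 / (\<bar>u\<bar> powr (q - 1) * u) + g1 u"
    and H3: "\<beta> > 0" "f \<beta> = 0" "\<forall>u>0. f u = 0 \<longrightarrow> u = \<beta>"
            "\<forall>u. 0 < u \<and> u < \<beta> \<longrightarrow> f u < 0" "\<forall>u>\<beta>. f u > 0"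
    and K_pos: "\<forall>r\<ge>R. K r > 0"
    and K_deriv: "\<forall>r\<ge>R. (K has_real_derivative K' r) (at r within {R..})"
    and K'_cont: "continuous_on {R..} K'"
    and H4_a: "\<forall>r\<ge>R. r * K' r / K r > - 2 * (real N - 1)"
    and H4_b: "K0 > 0" "K1 > 0" "real N + q * (real N - 2) < \<alpha>1" "\<alpha>1 \<le> \<alpha>"
              "\<alpha> < 2 * (real N - 1)"
    and H4_c: "\<forall>r\<ge>R. K0 * r powr (- \<alpha>) \<le> K r \<and> K r \<le> K1 * r powr (- \<alpha>1)"
    and a: "a > 0"
    and sol: "solves_Pa N R \<delta> K f a v"
  shows "finite {t \<in> {0..R powr (2 - real N)}. v t = 0}"
  using solves_Pa_finite_zeros[OF N R less_imp_le[OF \<delta>(2)] f_odd H2_q(1)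
      loc_lipschitz_on_UNIV_imp_isCont[OF H2_g1(1)] H2_eq H4_b(1) less_imp_le[OF H4_b(5)] _ a sol] H4_c
  by blast

end
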